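(* Let $L_{n+1},\dots,L_{n+m}\ge0$ be random risks and $E_{n+1},\dots,E_{n+m}$ random variables with $E_{n+j}\ge0$ a.s. and $\mathbb{E}[L_{n+j}E_{n+j}]\le1$ for all $j$. Fix $\alpha\in(0,1)$. (Heterogeneous boosting) Let $\xi_{n+1},\dots,\xi_{n+m}$ be i.i.d. $\mathrm{Unif}([0,1])$ independent of everything else, $k^*_{\mathrm{hete}}=\max\{k\in\{1,\dots,m\}:\sum_{j=1}^m\mathbf{1}\{E_{n+j}/\xi_{n+j}\ge m/(\alpha k)\}\ge k\}$ and $\mathcal{R}_{\mathrm{hete}}=\{j:E_{n+j}/\xi_{n+j}\ge m/(\alpha k^*_{\mathrm{hete}})\}$. (Homogeneous boosting) Let $\xi\sim\mathrm{Unif}([0,1])$ independent of everything else, $k^*_{\mathrm{homo}}=\max\{k:\sum_{j=1}^m\mathbf{1}\{E_{n+j}/\xi\ge m/(\alpha k)\}\ge k\}$ and $\mathcal{R}_{\mathrm{homo}}=\{j:E_{n+j}/\xi\ge m/(\alpha k^*_{\mathrm{homo}})\}$. (In both cases the selection set is empty if the maximum is over an empty set.) Then for $\mathcal{R}\in\{\mathcal{R}_{\mathrm{hete}},\mathcal{R}_{\mathrm{homo}}\}$, $$\mathbb{E}\Big[\frac{\sum_{j=1}^mL_{n+j}\mathbf{1}\{j\in\mathcal{R}\}}{1\vee|\mathcal{R}|}\Big]\le\alpha.$$ *)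

theory Defs
  imports "HOL-Probability.Probability"
begin

text \<open>The m test points carry indices n+1,...,n+m;
  T (n+j) is the (boosted) e-value of test point j.
  ebh_kstar returns the largest k in {1..m} with
  #{j. T(n+j) >= m/(alpha k)} >= k, and 0 if no such k exists.\<close>

definition ebh_kset :: "nat \<Rightarrow> nat \<Rightarrow> real \<Rightarrow> (nat \<Rightarrow> real) \<Rightarrow> nat set" where
  "ebh_kset n m \<alpha> T =
     {k \<in> {1..m}. card {j \<in> {1..m}. T (n + j) \<ge> real m / (\<alpha> * real k)} \<ge> k}"

definition ebh_kstar :: "nat \<Rightarrow> nat \<Rightarrow> real \<Rightarrow> (nat \<Rightarrow> real) \<Rightarrow> nat" where
  "ebh_kstar n m \<alpha> T = (if ebh_kset n m \<alpha> T = {} then 0 else Max (ebh_kset n m \<alpha> T))"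

definition ebh_sel :: "nat \<Rightarrow> nat \<Rightarrow> real \<Rightarrow> (nat \<Rightarrow> real) \<Rightarrow> nat set" where
  "ebh_sel n m \<alpha> T =
     (if ebh_kset n m \<alpha> T = {} then {}
      else {j \<in> {1..m}. T (n + j) \<ge> real m / (\<alpha> * real (ebh_kstar n m \<alpha> T))})"

definition risk_ratio :: "nat \<Rightarrow> (nat \<Rightarrow> real) \<Rightarrow> nat set \<Rightarrow> real" where
  "risk_ratio n L R = (\<Sum>j\<in>R. L (n + j)) / max 1 (real (card R))"

end

theory Submission
  imports Defs
begin

text \<open>
  Hypothesis \<open>j\<close> in the selection set \<open>R\<close> contributes \<open>L\<^sub>j / |R|\<close> to the risk ratio, and
  \<open>|R|\<close> is the e-BH count \<open>k\<^sup>*\<close> of the boosted e-values \<open>E\<^sub>j / \<xi>\<^sub>j\<close>. The count is replaced,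
  term by term, by a count \<open>K\<^sub>j \<le> |R|\<close> that does not depend on the boosting variable of \<open>j\<close> and
  for which selection of \<open>j\<close> forces \<open>\<xi>\<^sub>j \<le> \<alpha> E\<^sub>j K\<^sub>j / m\<close>. With heterogeneous boosting,
  \<open>K\<^sub>j\<close> is \<open>k\<^sup>*\<close> recomputed after moving the statistic of \<open>j\<close> to the top threshold \<open>m / \<alpha>\<close>,
  which equals \<open>k\<^sup>*\<close> whenever \<open>j\<close> is selected; with homogeneous boosting, \<open>k\<^sup>*\<close> is antitone
  in \<open>\<xi>\<close> and \<open>K\<^sub>j\<close> is its least value over the \<open>\<xi>\<close> that select \<open>j\<close>. Integrating the
  resulting bound \<open>L\<^sub>j\<^sup>+ / K\<^sub>j \<cdot> 1{\<xi>\<^sub>j \<le> \<alpha> E\<^sub>j K\<^sub>j / m}\<close> against the uniform law of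
  \<open>\<xi>\<^sub>j\<close>, independent of \<open>(L, E)\<close>, gives \<open>\<alpha> L\<^sub>j E\<^sub>j / m\<close>, and \<open>E[L\<^sub>j E\<^sub>j] \<le> 1\<close>
  sums these to \<open>\<alpha>\<close>.
\<close>

section \<open>The e-BH selection rule\<close>

lemma ebh_kset_subset: "ebh_kset n m \<alpha> T \<subseteq> {1..m}"
  by (auto simp: ebh_kset_def)

lemma finite_ebh_kset: "finite (ebh_kset n m \<alpha> T)"
  using ebh_kset_subset by (rule finite_subset) simp

lemma ebh_kstar_in_kset: "ebh_kset n m \<alpha> T \<noteq> {} \<Longrightarrow> ebh_kstar n m \<alpha> T \<in> ebh_kset n m \<alpha> T"
  by (simp add: ebh_kstar_def finite_ebh_kset)

lemma le_ebh_kstar: "k \<in> ebh_kset n m \<alpha> T \<Longrightarrow> k \<le> ebh_kstar n m \<alpha> T"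
  using finite_ebh_kset by (auto simp: ebh_kstar_def)

lemma ebh_kstar_pos: "ebh_kset n m \<alpha> T \<noteq> {} \<Longrightarrow> 0 < ebh_kstar n m \<alpha> T"
  using ebh_kstar_in_kset ebh_kset_subset by fastforce

lemma ebh_sel_subset: "ebh_sel n m \<alpha> T \<subseteq> {1..m}"
  by (auto simp: ebh_sel_def)

lemma mem_ebh_sel_iff:
  "j \<in> ebh_sel n m \<alpha> T \<longleftrightarrow> ebh_kset n m \<alpha> T \<noteq> {} \<and> j \<in> {1..m} \<and>
     real m / (\<alpha> * real (ebh_kstar n m \<alpha> T)) \<le> T (n + j)"
  by (auto simp: ebh_sel_def)

lemma ebh_kset_cong:
  "(\<And>j. j \<in> {1..m} \<Longrightarrow> T (n + j) = T' (n + j)) \<Longrightarrow> ebh_kset n m \<alpha> T = ebh_kset n m \<alpha> T'"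
  unfolding ebh_kset_def by (intro Collect_cong conj_cong refl arg_cong2[where f="(\<le>)"] arg_cong[where f=card]) auto

lemma ebh_sel_cong:
  assumes "\<And>j. j \<in> {1..m} \<Longrightarrow> T (n + j) = T' (n + j)"
  shows "ebh_sel n m \<alpha> T = ebh_sel n m \<alpha> T'"
proof -
  have "ebh_kset n m \<alpha> T = ebh_kset n m \<alpha> T'"
    by (rule ebh_kset_cong) (rule assms)
  with assms show ?thesis
    by (auto simp: ebh_sel_def ebh_kstar_def)
qed

lemma risk_ratio_cong:
  "(\<And>j. j \<in> R \<Longrightarrow> L (n + j) = L' (n + j)) \<Longrightarrow> risk_ratio n L R = risk_ratio n L' R"
  unfolding risk_ratio_def by (simp cong: sum.cong)

lemma ebh_threshold_antimono:
  fixes \<alpha> :: real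
  shows "0 < \<alpha> \<Longrightarrow> 0 < k \<Longrightarrow> k \<le> l \<Longrightarrow> real m / (\<alpha> * real l) \<le> real m / (\<alpha> * real k)"
  by (intro divide_left_mono) auto

lemma card_ebh_sel:
  assumes "0 < \<alpha>" "ebh_kset n m \<alpha> T \<noteq> {}"
  shows "card (ebh_sel n m \<alpha> T) = ebh_kstar n m \<alpha> T"
proof -
  define k where "k = ebh_kstar n m \<alpha> T"
  define R where "R = ebh_sel n m \<alpha> T"
  have R: "R = {j \<in> {1..m}. real m / (\<alpha> * real k) \<le> T (n + j)}"
    using assms by (simp add: R_def ebh_sel_def k_def)
  have "k \<in> ebh_kset n m \<alpha> T"
    unfolding k_def using assms(2) by (rule ebh_kstar_in_kset)
  then have k: "0 < k" "k \<le> card R"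
    by (auto simp: ebh_kset_def R)
  have "card R \<le> m"
    using card_mono[OF _ ebh_sel_subset] by (fastforce simp: R_def)
  moreover have "R \<subseteq> {j \<in> {1..m}. real m / (\<alpha> * real (card R)) \<le> T (n + j)}"
    using order_trans[OF ebh_threshold_antimono[OF assms(1) k]] by (auto simp: R)
  then have "card R \<le> card {j \<in> {1..m}. real m / (\<alpha> * real (card R)) \<le> T (n + j)}"
    by (intro card_mono) auto
  ultimately have "card R \<in> ebh_kset n m \<alpha> T"
    using k by (auto simp: ebh_kset_def)
  then have "card R \<le> k"
    unfolding k_def by (rule le_ebh_kstar)
  with k show ?thesis
    by (simp add: R_def k_def)
qed

lemma ebh_kstar_mono:
  assumes "0 < \<alpha>" "\<And>j. j \<in> {1..m} \<Longrightarrow> max 0 (T (n + j)) \<le> max 0 (T' (n + j))"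
  shows "ebh_kstar n m \<alpha> T \<le> ebh_kstar n m \<alpha> T'"
proof (cases "ebh_kset n m \<alpha> T = {}")
  case True
  then show ?thesis by (simp add: ebh_kstar_def)
next
  case False
  have "ebh_kset n m \<alpha> T \<subseteq> ebh_kset n m \<alpha> T'"
  proof
    fix k assume k: "k \<in> ebh_kset n m \<alpha> T"
    then have "0 < real m / (\<alpha> * real k)"
      using assms(1) by (auto simp: ebh_kset_def)
    then have "{j \<in> {1..m}. real m / (\<alpha> * real k) \<le> T (n + j)} \<subseteq> {j \<in> {1..m}. real m / (\<alpha> * real k) \<le> T' (n + j)}"
      using assms(2) by (fastforce simp: max_def split: if_splits)
    then have "card {j \<in> {1..m}. real m / (\<alpha> * real k) \<le> T (n + j)} \<le> card {j \<in> {1..m}. real m / (\<alpha> * real k) \<le> T' (n + j)}"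
      by (intro card_mono) auto
    with k show "k \<in> ebh_kset n m \<alpha> T'"
      by (auto simp: ebh_kset_def)
  qed
  with False show ?thesis
    using ebh_kstar_in_kset le_ebh_kstar by blast
qed

lemma ebh_sel_boost_le:
  assumes "0 < \<alpha>" "j \<in> ebh_sel n m \<alpha> (\<lambda>k. E k / Z k)" "0 < Z (n + j)"
  shows "Z (n + j) \<le> \<alpha> * E (n + j) / real m * real (ebh_kstar n m \<alpha> (\<lambda>k. E k / Z k))"
proof -
  define k where "k = ebh_kstar n m \<alpha> (\<lambda>k. E k / Z k)"
  have "0 < k" "0 < m" "real m / (\<alpha> * real k) \<le> E (n + j) / Z (n + j)"
    using assms(2) ebh_kstar_pos by (auto simp: mem_ebh_sel_iff k_def)
  with assms(1,3) show ?thesis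
    by (simp add: k_def[symmetric] field_simps)
qed

text \<open>The oracle count of hypothesis \<open>j\<close>: \<open>k\<^sup>*\<close> with the statistic of \<open>j\<close> raised to the top
  threshold \<open>m / \<alpha>\<close>, so that it ignores the boosting variable of \<open>j\<close>.\<close>

definition ebh_kstar_oracle :: "nat \<Rightarrow> nat \<Rightarrow> real \<Rightarrow> (nat \<Rightarrow> real) \<Rightarrow> nat \<Rightarrow> nat" where
  "ebh_kstar_oracle n m \<alpha> T j = ebh_kstar n m \<alpha> (T(n + j := real m / \<alpha>))"

lemma ebh_kstar_oracle_fun_upd [simp]:
  "ebh_kstar_oracle n m \<alpha> (T(n + j := x)) j = ebh_kstar_oracle n m \<alpha> T j"
  by (simp add: ebh_kstar_oracle_def)

lemma ebh_kstar_oracle_eq_ebh_kstar: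
  assumes "0 < \<alpha>" "j \<in> ebh_sel n m \<alpha> T"
  shows "ebh_kstar_oracle n m \<alpha> T j = ebh_kstar n m \<alpha> T"
proof -
  define T' where "T' = T(n + j := real m / \<alpha>)"
  define k where "k = ebh_kstar n m \<alpha> T"
  have ne: "ebh_kset n m \<alpha> T \<noteq> {}" and sj: "real m / (\<alpha> * real k) \<le> T (n + j)"
    using assms(2) by (auto simp: mem_ebh_sel_iff k_def)
  have k: "0 < k" "k \<in> ebh_kset n m \<alpha> T"
    using ebh_kstar_pos[OF ne] ebh_kstar_in_kset[OF ne] by (simp_all add: k_def)
  \<comment> \<open>\<open>j\<close> already clears every threshold \<open>m / (\<alpha> l)\<close> with \<open>l \<ge> k\<close>, so raising its statistic
    changes none of these counts\<close>
  have same_kset: "l \<in> ebh_kset n m \<alpha> T' \<longleftrightarrow> l \<in> ebh_kset n m \<alpha> T" if "k \<le> l" for l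
  proof -
    have "real m / (\<alpha> * real l) \<le> real m / (\<alpha> * real k)"
      using ebh_threshold_antimono[OF assms(1) k(1) that] .
    moreover have "real m / (\<alpha> * real l) \<le> real m / \<alpha>"
      using ebh_threshold_antimono[OF assms(1), of 1 l m] k(1) that by simp
    ultimately have "{i \<in> {1..m}. real m / (\<alpha> * real l) \<le> T' (n + i)}
        = {i \<in> {1..m}. real m / (\<alpha> * real l) \<le> T (n + i)}"
      using sj by (auto simp: T'_def)
    then show ?thesis
      by (simp add: ebh_kset_def)
  qed
  have "ebh_kset n m \<alpha> T' \<noteq> {}"
    using same_kset[of k] k by auto
  then have "ebh_kstar n m \<alpha> T' \<in> ebh_kset n m \<alpha> T'" and k_le: "k \<le> ebh_kstar n m \<alpha> T'"
    using ebh_kstar_in_kset le_ebh_kstar same_kset[of k] k by auto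
  then have "ebh_kstar n m \<alpha> T' \<in> ebh_kset n m \<alpha> T"
    using same_kset by blast
  then have "ebh_kstar n m \<alpha> T' \<le> k"
    unfolding k_def by (rule le_ebh_kstar)
  with k_le show ?thesis
    by (simp add: ebh_kstar_oracle_def T'_def k_def)
qed

text \<open>The homogeneous counterpart of the oracle count: \<open>k\<^sup>* (E / t)\<close> is antitone in \<open>t\<close>, and its
  least value over the \<open>t\<close> selecting \<open>j\<close> does not depend on \<open>t\<close>. If no \<open>t\<close> selects \<open>j\<close>,
  \<open>Inf {} = 0\<close> and the value is never used.\<close>

definition ebh_kstar_min_selecting :: "nat \<Rightarrow> nat \<Rightarrow> real \<Rightarrow> (nat \<Rightarrow> real) \<Rightarrow> nat \<Rightarrow> nat" where
  "ebh_kstar_min_selecting n m \<alpha> E j =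
     Inf {ebh_kstar n m \<alpha> (\<lambda>k. E k / t) | t. 0 < t \<and> j \<in> ebh_sel n m \<alpha> (\<lambda>k. E k / t)}"

lemma ebh_kstar_min_selecting_bounds:
  assumes "0 < \<alpha>" "0 < t" "j \<in> ebh_sel n m \<alpha> (\<lambda>k. E k / t)"
  defines "K \<equiv> ebh_kstar_min_selecting n m \<alpha> E j"
  shows "0 < K" and "K \<le> ebh_kstar n m \<alpha> (\<lambda>k. E k / t)" and "t \<le> \<alpha> * E (n + j) / real m * real K"
proof -
  define S where "S = {ebh_kstar n m \<alpha> (\<lambda>k. E k / t) | t. 0 < t \<and> j \<in> ebh_sel n m \<alpha> (\<lambda>k. E k / t)}"
  have "ebh_kstar n m \<alpha> (\<lambda>k. E k / t) \<in> S"
    using assms(2,3) by (auto simp: S_def)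
  then show K_le: "K \<le> ebh_kstar n m \<alpha> (\<lambda>k. E k / t)"
    unfolding K_def ebh_kstar_min_selecting_def S_def[symmetric] by (rule cInf_lower) simp
  have "K \<in> S"
    using \<open>ebh_kstar n m \<alpha> (\<lambda>k. E k / t) \<in> S\<close> unfolding K_def ebh_kstar_min_selecting_def S_def[symmetric]
    by (intro Inf_nat_def1) blast
  then obtain t0 where t0: "0 < t0" "j \<in> ebh_sel n m \<alpha> (\<lambda>k. E k / t0)"
    and K_eq: "K = ebh_kstar n m \<alpha> (\<lambda>k. E k / t0)"
    by (auto simp: S_def)
  then show "0 < K"
    using ebh_kstar_pos by (simp add: mem_ebh_sel_iff)
  have t0_le: "t0 \<le> \<alpha> * E (n + j) / real m * real K"
    using ebh_sel_boost_le[OF assms(1), of j n m E "\<lambda>_. t0"] t0 K_eq by simp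
  show "t \<le> \<alpha> * E (n + j) / real m * real K"
  proof (cases "t \<le> t0")
    case True
    with t0_le show ?thesis by linarith
  next
    case False
    have "max 0 (E i / t) \<le> max 0 (E i / t0)" for i
      using False t0(1) by (cases "0 \<le> E i") (auto intro: divide_left_mono simp: divide_nonpos_pos)
    then have "ebh_kstar n m \<alpha> (\<lambda>k. E k / t) \<le> K"
      unfolding K_eq by (intro ebh_kstar_mono[OF assms(1)])
    then have "K = ebh_kstar n m \<alpha> (\<lambda>k. E k / t)"
      using K_le by simp
    then show ?thesis
      using ebh_sel_boost_le[OF assms(1), of j n m E "\<lambda>_. t"] assms(2,3) by simp
  qed
qed

section \<open>Pointwise bounds on the risk ratio\<close>

text \<open>The disjunct \<open>z \<le> 0\<close>, a null event for uniform \<open>z\<close>, covers the boosting values at which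
  \<open>E / z\<close> has the wrong sign.\<close>

definition share_bound :: "real \<Rightarrow> real \<Rightarrow> nat \<Rightarrow> real \<Rightarrow> ennreal" where
  "share_bound z c K l = (if z \<le> 0 \<or> z \<le> c * real K then ennreal (max 0 l / real K) else 0)"

lemma risk_ratio_le_sum_share_bound:
  assumes "R \<subseteq> {1..m}"
    and "\<And>j. j \<in> R \<Longrightarrow> 0 < K j \<and> K j \<le> card R \<and> (z j \<le> 0 \<or> z j \<le> c j * real (K j))"
  shows "ennreal (risk_ratio n L R) \<le> (\<Sum>j\<in>{1..m}. share_bound (z j) (c j) (K j) (L (n + j)))"
proof -
  have "finite R"
    using assms(1) by (rule finite_subset) simp
  then have "max 1 (real (card R)) = real (card R)" if "R \<noteq> {}"
    using that by (simp add: Suc_le_eq card_gt_0_iff)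
  then have "risk_ratio n L R \<le> (\<Sum>j\<in>R. max 0 (L (n + j)) / real (card R))"
    unfolding risk_ratio_def sum_divide_distrib[symmetric]
    by (cases "R = {}") (auto intro!: divide_right_mono sum_mono)
  then have "ennreal (risk_ratio n L R) \<le> (\<Sum>j\<in>R. ennreal (max 0 (L (n + j)) / real (card R)))"
    by (simp add: ennreal_leI sum_ennreal)
  also have "\<dots> \<le> (\<Sum>j\<in>R. share_bound (z j) (c j) (K j) (L (n + j)))"
  proof (rule sum_mono)
    fix j assume "j \<in> R"
    with assms(2)[of j] show "ennreal (max 0 (L (n + j)) / real (card R)) \<le> share_bound (z j) (c j) (K j) (L (n + j))"
      by (auto simp: share_bound_def intro!: ennreal_leI divide_left_mono)
  qed
  also have "\<dots> \<le> (\<Sum>j\<in>{1..m}. share_bound (z j) (c j) (K j) (L (n + j)))"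
    using assms(1) by (intro sum_mono2) auto
  finally show ?thesis .
qed

lemma risk_ratio_ebh_sel_le_hete:
  assumes "0 < \<alpha>"
  shows "ennreal (risk_ratio n L (ebh_sel n m \<alpha> (\<lambda>k. E k / z k))) \<le>
    (\<Sum>j\<in>{1..m}. share_bound (z (n + j)) (\<alpha> * E (n + j) / real m)
       (ebh_kstar_oracle n m \<alpha> (\<lambda>k. E k / z k) j) (L (n + j)))"
proof (rule risk_ratio_le_sum_share_bound[OF ebh_sel_subset])
  fix j assume j: "j \<in> ebh_sel n m \<alpha> (\<lambda>k. E k / z k)"
  then have "ebh_kset n m \<alpha> (\<lambda>k. E k / z k) \<noteq> {}"
    by (simp add: mem_ebh_sel_iff)
  with j show "0 < ebh_kstar_oracle n m \<alpha> (\<lambda>k. E k / z k) j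
      \<and> ebh_kstar_oracle n m \<alpha> (\<lambda>k. E k / z k) j \<le> card (ebh_sel n m \<alpha> (\<lambda>k. E k / z k))
      \<and> (z (n + j) \<le> 0 \<or> z (n + j) \<le> \<alpha> * E (n + j) / real m * real (ebh_kstar_oracle n m \<alpha> (\<lambda>k. E k / z k) j))"
    using ebh_sel_boost_le[OF assms j] ebh_kstar_pos
    by (auto simp: ebh_kstar_oracle_eq_ebh_kstar[OF assms] card_ebh_sel[OF assms] not_less)
qed

lemma risk_ratio_ebh_sel_le_homo:
  assumes "0 < \<alpha>" "0 < t"
  shows "ennreal (risk_ratio n L (ebh_sel n m \<alpha> (\<lambda>k. E k / t))) \<le>
    (\<Sum>j\<in>{1..m}. share_bound t (\<alpha> * E (n + j) / real m)
       (ebh_kstar_min_selecting n m \<alpha> E j) (L (n + j)))"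
proof (rule risk_ratio_le_sum_share_bound[OF ebh_sel_subset])
  fix j assume j: "j \<in> ebh_sel n m \<alpha> (\<lambda>k. E k / t)"
  then have "ebh_kset n m \<alpha> (\<lambda>k. E k / t) \<noteq> {}"
    by (simp add: mem_ebh_sel_iff)
  with j assms show "0 < ebh_kstar_min_selecting n m \<alpha> E j
      \<and> ebh_kstar_min_selecting n m \<alpha> E j \<le> card (ebh_sel n m \<alpha> (\<lambda>k. E k / t))
      \<and> (t \<le> 0 \<or> t \<le> \<alpha> * E (n + j) / real m * real (ebh_kstar_min_selecting n m \<alpha> E j))"
    using ebh_kstar_min_selecting_bounds[OF assms j] card_ebh_sel[OF assms(1)] by simp
qed

section \<open>Measurability\<close>

context
  fixes N :: "'a measure" and T :: "'a \<Rightarrow> nat \<Rightarrow> real" and n m :: nat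
  assumes T_measurable [measurable]: "\<And>j. j \<in> {1..m} \<Longrightarrow> (\<lambda>\<omega>. T \<omega> (n + j)) \<in> borel_measurable N"
begin

lemma pred_mem_ebh_kset [measurable]: "Measurable.pred N (\<lambda>\<omega>. k \<in> ebh_kset n m \<alpha> (T \<omega>))"
proof -
  have [measurable]: "Measurable.pred N (\<lambda>\<omega>. j \<in> {j \<in> {1..m}. real m / (\<alpha> * real k) \<le> T \<omega> (n + j)})" for j
  proof (cases "j \<in> {1..m}")
    case True
    note [measurable] = T_measurable[OF True]
    show ?thesis by measurable
  qed simp
  show ?thesis
    unfolding ebh_kset_def by measurable
qed

lemma measurable_ebh_kstar [measurable]:
  "(\<lambda>\<omega>. ebh_kstar n m \<alpha> (T \<omega>)) \<in> measurable N (count_space UNIV)"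
proof -
  have "ebh_kstar n m \<alpha> (T \<omega>) = Max {k. k = 0 \<or> k \<in> ebh_kset n m \<alpha> (T \<omega>)}" for \<omega>
  proof -
    have "{k. k = 0 \<or> k \<in> ebh_kset n m \<alpha> (T \<omega>)} = insert 0 (ebh_kset n m \<alpha> (T \<omega>))"
      by auto
    then show ?thesis
      using finite_ebh_kset ebh_kset_subset by (fastforce simp: ebh_kstar_def Max_insert)
  qed
  then show ?thesis
    by simp
qed

lemma pred_mem_ebh_sel [measurable]: "Measurable.pred N (\<lambda>\<omega>. j \<in> ebh_sel n m \<alpha> (T \<omega>))"
proof -
  have "j \<in> ebh_sel n m \<alpha> (T \<omega>) \<longleftrightarrow> ebh_kstar n m \<alpha> (T \<omega>) \<noteq> 0 \<and> j \<in> {1..m}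
      \<and> real m / (\<alpha> * real (ebh_kstar n m \<alpha> (T \<omega>))) \<le> T \<omega> (n + j)" for \<omega>
    using ebh_kstar_pos by (auto simp: mem_ebh_sel_iff ebh_kstar_def)
  moreover have "Measurable.pred N (\<lambda>\<omega>. ebh_kstar n m \<alpha> (T \<omega>) \<noteq> 0 \<and> j \<in> {1..m}
      \<and> real m / (\<alpha> * real (ebh_kstar n m \<alpha> (T \<omega>))) \<le> T \<omega> (n + j))"
  proof (cases "j \<in> {1..m}")
    case True
    note [measurable] = T_measurable[OF True]
    show ?thesis by measurable
  qed simp
  ultimately show ?thesis
    by simp
qed

lemma measurable_risk_ratio_ebh_sel [measurable]:
  assumes [measurable]: "\<And>j. j \<in> {1..m} \<Longrightarrow> (\<lambda>\<omega>. L \<omega> (n + j)) \<in> borel_measurable N"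
  shows "(\<lambda>\<omega>. risk_ratio n (L \<omega>) (ebh_sel n m \<alpha> (T \<omega>))) \<in> borel_measurable N"
proof -
  have "risk_ratio n (L \<omega>) (ebh_sel n m \<alpha> (T \<omega>)) =
      (\<Sum>j\<in>{1..m}. if j \<in> ebh_sel n m \<alpha> (T \<omega>) then L \<omega> (n + j) else 0)
        / max 1 (real (card (ebh_sel n m \<alpha> (T \<omega>))))" for \<omega>
    unfolding risk_ratio_def using ebh_sel_subset
    by (simp add: sum.If_cases Int_absorb1)
  moreover have "(\<lambda>\<omega>. (\<Sum>j\<in>{1..m}. if j \<in> ebh_sel n m \<alpha> (T \<omega>) then L \<omega> (n + j) else 0)) \<in> borel_measurable N"
    by (intro borel_measurable_sum) simp
  ultimately show ?thesis
    by simp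
qed

end

lemma measurable_ebh_kstar_oracle:
  assumes "\<And>j. j \<in> {1..m} \<Longrightarrow> (\<lambda>\<omega>. T \<omega> (n + j)) \<in> borel_measurable N"
  shows "(\<lambda>\<omega>. ebh_kstar_oracle n m \<alpha> (T \<omega>) i) \<in> measurable N (count_space UNIV)"
  unfolding ebh_kstar_oracle_def
proof (rule measurable_ebh_kstar)
  fix j assume "j \<in> {1..m}"
  then show "(\<lambda>\<omega>. ((T \<omega>)(n + i := real m / \<alpha>)) (n + j)) \<in> borel_measurable N"
    using assms by (cases "j = i") simp_all
qed

lemma measurable_share_bound:
  assumes [measurable]: "f \<in> borel_measurable N" "K \<in> measurable N (count_space UNIV)"
  shows "(\<lambda>\<omega>. share_bound (f \<omega>) c (K \<omega>) l) \<in> borel_measurable N"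
  unfolding share_bound_def by measurable

section \<open>Integrating out the boosting variables\<close>

lemma prob_space_uniform_unit_interval: "prob_space (uniform_measure lborel {0..1::real})"
  by (rule prob_space_uniform_measure) simp_all

lemma nn_integral_share_bound_uniform:
  "(\<integral>\<^sup>+z. share_bound z c K l \<partial>uniform_measure lborel {0..1::real}) \<le> ennreal (c * l)"
proof -
  define b where "b = max 0 (c * real K)"
  have "emeasure (uniform_measure lborel {0..1::real}) {..b} = emeasure lborel {0..min 1 b}"
    by (simp add: emeasure_uniform_measure min.commute divide_ennreal_def)
  also have "\<dots> \<le> emeasure lborel {0..b}"
    by (intro emeasure_mono) auto
  finally have measure_le: "emeasure (uniform_measure lborel {0..1::real}) {..b} \<le> ennreal b"
    by (simp add: b_def)
  have "share_bound z c K l = ennreal (max 0 l / real K) * indicator {..b} z" for z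
    by (auto simp: share_bound_def b_def indicator_def)
  then have "(\<integral>\<^sup>+z. share_bound z c K l \<partial>uniform_measure lborel {0..1::real})
      = ennreal (max 0 l / real K) * emeasure (uniform_measure lborel {0..1::real}) {..b}"
    by (simp add: nn_integral_cmult_indicator)
  also have "\<dots> \<le> ennreal (max 0 l / real K) * ennreal b"
    using measure_le by (rule mult_left_mono) simp
  also have "\<dots> = ennreal (max 0 l / real K * b)"
    by (rule ennreal_mult'[symmetric]) simp
  also have "\<dots> \<le> ennreal (c * l)"
    by (cases "K = 0") (auto simp: b_def max_def intro!: ennreal_leI)
  finally show ?thesis .
qed

lemma nn_integral_PiM_le_section_bound:
  assumes "\<And>i. prob_space (M i)" "finite I" "i \<in> I" "f \<in> borel_measurable (Pi\<^sub>M I M)"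
    and "\<And>x. (\<integral>\<^sup>+y. f (x(i := y)) \<partial>M i) \<le> c"
  shows "integral\<^sup>N (Pi\<^sub>M I M) f \<le> c"
proof -
  interpret product_sigma_finite M
    by (simp add: product_sigma_finite_def prob_space_imp_sigma_finite assms(1))
  interpret rest: prob_space "Pi\<^sub>M (I - {i}) M"
    by (rule prob_space_PiM) (rule assms(1))
  have I: "insert i (I - {i}) = I"
    using assms(3) by blast
  have "integral\<^sup>N (Pi\<^sub>M I M) f = (\<integral>\<^sup>+x. (\<integral>\<^sup>+y. f (x(i := y)) \<partial>M i) \<partial>Pi\<^sub>M (I - {i}) M)"
    using product_nn_integral_insert[of "I - {i}" i f] assms(2,4) unfolding I by simp
  also have "\<dots> \<le> (\<integral>\<^sup>+x. c \<partial>Pi\<^sub>M (I - {i}) M)"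
    by (intro nn_integral_mono assms(5))
  also have "\<dots> = c"
    by (simp add: rest.emeasure_space_1)
  finally show ?thesis .
qed

lemma nn_integral_risk_ratio_ebh_sel_hete_le:
  assumes "0 < \<alpha>"
  shows "(\<integral>\<^sup>+z. ennreal (risk_ratio n L (ebh_sel n m \<alpha> (\<lambda>k. E k / z k)))
      \<partial>Pi\<^sub>M {n+1..n+m} (\<lambda>_. uniform_measure lborel {0..1::real}))
    \<le> (\<Sum>j\<in>{1..m}. ennreal (\<alpha> * E (n + j) / real m * L (n + j)))"
proof -
  let ?U = "uniform_measure lborel {0..1::real}"
  let ?P = "Pi\<^sub>M {n+1..n+m} (\<lambda>_. ?U)"
  let ?share = "\<lambda>j z. share_bound (z (n + j)) (\<alpha> * E (n + j) / real m)
       (ebh_kstar_oracle n m \<alpha> (\<lambda>k. E k / z k) j) (L (n + j))"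
  have P_sets: "sets ?P = sets (Pi\<^sub>M {n+1..n+m} (\<lambda>_. borel :: real measure))"
    by (rule sets_PiM_cong) simp_all
  have component_measurable: "(\<lambda>z. z (n + j)) \<in> borel_measurable ?P" if "j \<in> {1..m}" for j
    unfolding measurable_cong_sets[OF P_sets refl] using that by (intro measurable_component_singleton) auto
  have share_measurable: "?share j \<in> borel_measurable ?P" if "j \<in> {1..m}" for j
  proof (intro measurable_share_bound component_measurable[OF that] measurable_ebh_kstar_oracle)
    fix i assume "i \<in> {1..m}"
    note [measurable] = component_measurable[OF this]
    show "(\<lambda>z. E (n + i) / z (n + i)) \<in> borel_measurable ?P" by measurable
  qed
  have "(\<integral>\<^sup>+z. ennreal (risk_ratio n L (ebh_sel n m \<alpha> (\<lambda>k. E k / z k))) \<partial>?P)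
      \<le> (\<integral>\<^sup>+z. (\<Sum>j\<in>{1..m}. ?share j z) \<partial>?P)"
    by (intro nn_integral_mono risk_ratio_ebh_sel_le_hete assms)
  also have "\<dots> = (\<Sum>j\<in>{1..m}. \<integral>\<^sup>+z. ?share j z \<partial>?P)"
    by (intro nn_integral_sum share_measurable)
  also have "\<dots> \<le> (\<Sum>j\<in>{1..m}. ennreal (\<alpha> * E (n + j) / real m * L (n + j)))"
  proof (rule sum_mono)
    fix j assume j: "j \<in> {1..m}"
    have "(\<lambda>k. E k / (z(n + j := y)) k) = (\<lambda>k. E k / z k)(n + j := E (n + j) / y)" for z y
      by auto
    then have "?share j (z(n + j := y)) = share_bound y (\<alpha> * E (n + j) / real m)
        (ebh_kstar_oracle n m \<alpha> (\<lambda>k. E k / z k) j) (L (n + j))" for z y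
      by simp
    then have section_bound: "(\<integral>\<^sup>+y. ?share j (z(n + j := y)) \<partial>?U) \<le> ennreal (\<alpha> * E (n + j) / real m * L (n + j))" for z
      by (simp only: nn_integral_share_bound_uniform)
    show "(\<integral>\<^sup>+z. ?share j z \<partial>?P) \<le> ennreal (\<alpha> * E (n + j) / real m * L (n + j))"
      by (rule nn_integral_PiM_le_section_bound[OF prob_space_uniform_unit_interval _ _ share_measurable[OF j] section_bound])
        (use j in auto)
  qed
  finally show ?thesis .
qed

lemma nn_integral_risk_ratio_ebh_sel_homo_le:
  assumes "0 < \<alpha>"
  shows "(\<integral>\<^sup>+t. ennreal (risk_ratio n L (ebh_sel n m \<alpha> (\<lambda>k. E k / t)))
      \<partial>uniform_measure lborel {0..1::real})
    \<le> (\<Sum>j\<in>{1..m}. ennreal (\<alpha> * E (n + j) / real m * L (n + j)))"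
proof -
  let ?U = "uniform_measure lborel {0..1::real}"
  let ?share = "\<lambda>j t. share_bound t (\<alpha> * E (n + j) / real m)
       (ebh_kstar_min_selecting n m \<alpha> E j) (L (n + j))"
  have "AE t in ?U. 0 < t"
    using AE_lborel_singleton[of "0::real"] by (intro AE_uniform_measureI) auto
  then have "AE t in ?U. ennreal (risk_ratio n L (ebh_sel n m \<alpha> (\<lambda>k. E k / t))) \<le> (\<Sum>j\<in>{1..m}. ?share j t)"
    by eventually_elim (rule risk_ratio_ebh_sel_le_homo[OF assms])
  then have "(\<integral>\<^sup>+t. ennreal (risk_ratio n L (ebh_sel n m \<alpha> (\<lambda>k. E k / t))) \<partial>?U)
      \<le> (\<integral>\<^sup>+t. (\<Sum>j\<in>{1..m}. ?share j t) \<partial>?U)"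
    by (rule nn_integral_mono_AE)
  also have "\<dots> = (\<Sum>j\<in>{1..m}. \<integral>\<^sup>+t. ?share j t \<partial>?U)"
    by (intro nn_integral_sum) (simp add: share_bound_def)
  also have "\<dots> \<le> (\<Sum>j\<in>{1..m}. ennreal (\<alpha> * E (n + j) / real m * L (n + j)))"
    by (intro sum_mono nn_integral_share_bound_uniform)
  finally show ?thesis .
qed

section \<open>Independence and averaging over the test points\<close>

lemma (in prob_space) pair_distr_eq_if_indep_set:
  assumes X: "random_variable S X" and Y: "random_variable T Y"
    and indep: "indep_set (sets (vimage_algebra (space M) X S)) (sets (vimage_algebra (space M) Y T))"
  shows "distr M S X \<Otimes>\<^sub>M distr M T Y = distr M (S \<Otimes>\<^sub>M T) (\<lambda>\<omega>. (X \<omega>, Y \<omega>))"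
proof -
  interpret X: prob_space "distr M S X"
    using X by (rule prob_space_distr)
  interpret Y: prob_space "distr M T Y"
    using Y by (rule prob_space_distr)
  interpret XY: pair_prob_space "distr M S X" "distr M T Y" ..
  show ?thesis
  proof (rule pair_measure_eqI)
    fix A B assume A: "A \<in> sets (distr M S X)" and B: "B \<in> sets (distr M T Y)"
    have "emeasure (distr M (S \<Otimes>\<^sub>M T) (\<lambda>\<omega>. (X \<omega>, Y \<omega>))) (A \<times> B)
        = emeasure M ((X -` A \<inter> space M) \<inter> (Y -` B \<inter> space M))"
      using A B by (subst emeasure_distr[OF measurable_Pair[OF X Y]]) (auto intro!: arg_cong[where f="emeasure M"])
    also have "\<dots> = emeasure M (X -` A \<inter> space M) * emeasure M (Y -` B \<inter> space M)"
      using indep_setD[OF indep, of "X -` A \<inter> space M" "Y -` B \<inter> space M"] A B X Y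
      by (simp add: in_vimage_algebra measurable_sets emeasure_eq_measure measure_nonneg ennreal_mult)
    also have "\<dots> = emeasure (distr M S X) A * emeasure (distr M T Y) B"
      using X Y A B by (simp add: emeasure_distr)
    finally show "emeasure (distr M S X) A * emeasure (distr M T Y) B
        = emeasure (distr M (S \<Otimes>\<^sub>M T) (\<lambda>\<omega>. (X \<omega>, Y \<omega>))) (A \<times> B)"
      by simp
  qed (simp_all add: X.sigma_finite_measure_axioms Y.sigma_finite_measure_axioms)
qed

lemma (in prob_space) nn_integral_indep_set_iterated:
  assumes X: "random_variable S X" and Y: "random_variable T Y"
    and indep: "indep_set (sets (vimage_algebra (space M) X S)) (sets (vimage_algebra (space M) Y T))"
    and f: "f \<in> borel_measurable (S \<Otimes>\<^sub>M T)"
  shows "(\<integral>\<^sup>+\<omega>. f (X \<omega>, Y \<omega>) \<partial>M) = (\<integral>\<^sup>+x. \<integral>\<^sup>+y. f (x, y) \<partial>distr M T Y \<partial>distr M S X)"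
proof -
  interpret Y: prob_space "distr M T Y"
    using Y by (rule prob_space_distr)
  have "sets (distr M S X \<Otimes>\<^sub>M distr M T Y) = sets (S \<Otimes>\<^sub>M T)"
    by (rule sets_pair_measure_cong) simp_all
  then have "f \<in> borel_measurable (distr M S X \<Otimes>\<^sub>M distr M T Y)"
    unfolding measurable_cong_sets[OF _ refl] using f by simp
  then have "(\<integral>\<^sup>+x. \<integral>\<^sup>+y. f (x, y) \<partial>distr M T Y \<partial>distr M S X) = integral\<^sup>N (distr M S X \<Otimes>\<^sub>M distr M T Y) f"
    by (rule Y.nn_integral_fst)
  also have "\<dots> = (\<integral>\<^sup>+\<omega>. f (X \<omega>, Y \<omega>) \<partial>M)"
    unfolding pair_distr_eq_if_indep_set[OF X Y indep]
    using f by (subst nn_integral_distr[OF measurable_Pair[OF X Y]]) simp_all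
  finally show ?thesis ..
qed

lemma sum_nn_integral_average_le:
  assumes "0 \<le> \<alpha>" "\<And>j. j \<in> {1..m} \<Longrightarrow> f j \<in> borel_measurable M"
    and "\<And>j. j \<in> {1..m} \<Longrightarrow> (\<integral>\<^sup>+\<omega>. ennreal (f j \<omega>) \<partial>M) \<le> 1"
  shows "(\<Sum>j\<in>{1..m}. \<integral>\<^sup>+\<omega>. ennreal (\<alpha> / real m * f j \<omega>) \<partial>M) \<le> ennreal \<alpha>"
proof -
  have "(\<Sum>j\<in>{1..m}. \<integral>\<^sup>+\<omega>. ennreal (\<alpha> / real m * f j \<omega>) \<partial>M)
      = (\<Sum>j\<in>{1..m}. ennreal (\<alpha> / real m) * \<integral>\<^sup>+\<omega>. ennreal (f j \<omega>) \<partial>M)"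
  proof (rule sum.cong[OF refl])
    fix j assume "j \<in> {1..m}"
    have "ennreal (\<alpha> / real m * f j \<omega>) = ennreal (\<alpha> / real m) * ennreal (f j \<omega>)" for \<omega>
      using assms(1) by (intro ennreal_mult') simp
    then show "(\<integral>\<^sup>+\<omega>. ennreal (\<alpha> / real m * f j \<omega>) \<partial>M) = ennreal (\<alpha> / real m) * \<integral>\<^sup>+\<omega>. ennreal (f j \<omega>) \<partial>M"
      using assms(2)[OF \<open>j \<in> {1..m}\<close>] by (simp only:) (rule nn_integral_cmult, measurable)
  qed
  also have "\<dots> \<le> (\<Sum>j\<in>{1..m}. ennreal (\<alpha> / real m))"
    using assms(3) by (intro sum_mono) (auto intro: mult_left_le)
  also have "\<dots> \<le> ennreal \<alpha>"
    using assms(1) by (cases "m = 0") (simp_all add: ennreal_of_nat_eq_real_of_nat ennreal_mult'[symmetric])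
  finally show ?thesis .
qed

lemma (in prob_space) nn_integral_sum_scaled_products_le:
  assumes "0 \<le> \<alpha>"
    and L: "\<And>j. j \<in> {n+1..n+m} \<Longrightarrow> L j \<in> borel_measurable M"
    and E: "\<And>j. j \<in> {n+1..n+m} \<Longrightarrow> E j \<in> borel_measurable M"
    and LE: "\<And>j. j \<in> {n+1..n+m} \<Longrightarrow> (\<integral>\<^sup>+\<omega>. ennreal (L j \<omega> * E j \<omega>) \<partial>M) \<le> 1"
  defines "X \<equiv> \<lambda>\<omega>. \<lambda>j\<in>{n+1..n+m}. (L j \<omega>, E j \<omega>)"
  shows "(\<integral>\<^sup>+x. (\<Sum>j\<in>{1..m}. ennreal (\<alpha> * snd (x (n + j)) / real m * fst (x (n + j))))
      \<partial>distr M (Pi\<^sub>M {n+1..n+m} (\<lambda>_. borel \<Otimes>\<^sub>M borel)) X) \<le> ennreal \<alpha>"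
proof -
  let ?S = "Pi\<^sub>M {n+1..n+m} (\<lambda>_. borel \<Otimes>\<^sub>M borel :: (real \<times> real) measure)"
  have X: "random_variable ?S X"
    unfolding X_def using L E by (intro measurable_restrict) auto
  have component: "(\<lambda>x. x (n + j)) \<in> measurable ?S (borel \<Otimes>\<^sub>M borel)" if "j \<in> {1..m}" for j
    using that by (intro measurable_component_singleton) auto
  have "(\<lambda>x. \<Sum>j\<in>{1..m}. ennreal (\<alpha> * snd (x (n + j)) / real m * fst (x (n + j)))) \<in> borel_measurable ?S"
  proof (intro borel_measurable_sum)
    fix j assume "j \<in> {1..m}"
    note [measurable] = component[OF this]
    show "(\<lambda>x. ennreal (\<alpha> * snd (x (n + j)) / real m * fst (x (n + j)))) \<in> borel_measurable ?S"
      by measurable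
  qed
  then have "(\<integral>\<^sup>+x. (\<Sum>j\<in>{1..m}. ennreal (\<alpha> * snd (x (n + j)) / real m * fst (x (n + j)))) \<partial>distr M ?S X)
      = (\<integral>\<^sup>+\<omega>. (\<Sum>j\<in>{1..m}. ennreal (\<alpha> * snd (X \<omega> (n + j)) / real m * fst (X \<omega> (n + j)))) \<partial>M)"
    using X by (intro nn_integral_distr) simp_all
  also have "\<dots> = (\<integral>\<^sup>+\<omega>. (\<Sum>j\<in>{1..m}. ennreal (\<alpha> / real m * (L (n + j) \<omega> * E (n + j) \<omega>))) \<partial>M)"
    by (intro nn_integral_cong sum.cong refl) (simp add: X_def field_simps)
  also have "\<dots> = (\<Sum>j\<in>{1..m}. \<integral>\<^sup>+\<omega>. ennreal (\<alpha> / real m * (L (n + j) \<omega> * E (n + j) \<omega>)) \<partial>M)"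
    using L E by (intro nn_integral_sum) simp
  also have "\<dots> \<le> ennreal \<alpha>"
    using L E LE by (intro sum_nn_integral_average_le assms(1)) auto
  finally show ?thesis .
qed

lemma (in prob_space) nn_integral_risk_ratio_boosted_le:
  fixes L E D :: "nat \<Rightarrow> 'a \<Rightarrow> real" and Z :: "'a \<Rightarrow> 'b" and B :: "'b \<Rightarrow> nat \<Rightarrow> real"
  assumes "0 \<le> \<alpha>"
    and L: "\<And>j. j \<in> {n+1..n+m} \<Longrightarrow> L j \<in> borel_measurable M"
    and E: "\<And>j. j \<in> {n+1..n+m} \<Longrightarrow> E j \<in> borel_measurable M"
    and LE: "\<And>j. j \<in> {n+1..n+m} \<Longrightarrow> (\<integral>\<^sup>+\<omega>. ennreal (L j \<omega> * E j \<omega>) \<partial>M) \<le> 1"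
    and Z: "random_variable Q Z"
    and indep: "indep_set
      (sets (vimage_algebra (space M) (\<lambda>\<omega>. \<lambda>j\<in>{n+1..n+m}. (L j \<omega>, E j \<omega>)) (Pi\<^sub>M {n+1..n+m} (\<lambda>_. borel \<Otimes>\<^sub>M borel))))
      (sets (vimage_algebra (space M) Z Q))"
    and B: "\<And>j. j \<in> {1..m} \<Longrightarrow> (\<lambda>z. B z (n + j)) \<in> borel_measurable Q"
    and D: "\<And>\<omega> j. \<omega> \<in> space M \<Longrightarrow> j \<in> {1..m} \<Longrightarrow> D (n + j) \<omega> = B (Z \<omega>) (n + j)"
    and inner: "\<And>l e. (\<integral>\<^sup>+z. ennreal (risk_ratio n l (ebh_sel n m \<alpha> (\<lambda>k. e k / B z k))) \<partial>distr M Q Z)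
      \<le> (\<Sum>j\<in>{1..m}. ennreal (\<alpha> * e (n + j) / real m * l (n + j)))"
  shows "(\<integral>\<^sup>+\<omega>. ennreal (risk_ratio n (\<lambda>j. L j \<omega>) (ebh_sel n m \<alpha> (\<lambda>j. E j \<omega> / D j \<omega>))) \<partial>M) \<le> ennreal \<alpha>"
proof -
  let ?S = "Pi\<^sub>M {n+1..n+m} (\<lambda>_. borel \<Otimes>\<^sub>M borel :: (real \<times> real) measure)"
  let ?X = "\<lambda>\<omega>. \<lambda>j\<in>{n+1..n+m}. (L j \<omega>, E j \<omega>)"
  define F where "F p = ennreal (risk_ratio n (\<lambda>k. fst (fst p k)) (ebh_sel n m \<alpha> (\<lambda>k. snd (fst p k) / B (snd p) k)))"
    for p :: "((nat \<Rightarrow> real \<times> real) \<times> 'b)"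
  have X: "random_variable ?S ?X"
    using L E by (intro measurable_restrict) auto
  have F_measurable: "F \<in> borel_measurable (?S \<Otimes>\<^sub>M Q)"
  proof -
    have [measurable]: "(\<lambda>p. fst p (n + j)) \<in> measurable (?S \<Otimes>\<^sub>M Q) (borel \<Otimes>\<^sub>M borel)" if "j \<in> {1..m}" for j
      using that by (intro measurable_compose[OF measurable_fst measurable_component_singleton]) auto
    have "(\<lambda>p. risk_ratio n (\<lambda>k. fst (fst p k)) (ebh_sel n m \<alpha> (\<lambda>k. snd (fst p k) / B (snd p) k)))
        \<in> borel_measurable (?S \<Otimes>\<^sub>M Q)"
    proof (rule measurable_risk_ratio_ebh_sel)
      fix j assume j: "j \<in> {1..m}"
      note [measurable] = B[OF j]
      show "(\<lambda>p. snd (fst p (n + j)) / B (snd p) (n + j)) \<in> borel_measurable (?S \<Otimes>\<^sub>M Q)"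
        using j by measurable
      show "(\<lambda>p. fst (fst p (n + j))) \<in> borel_measurable (?S \<Otimes>\<^sub>M Q)"
        using j by measurable
    qed
    then show ?thesis
      unfolding F_def by measurable
  qed
  have "(\<integral>\<^sup>+\<omega>. ennreal (risk_ratio n (\<lambda>j. L j \<omega>) (ebh_sel n m \<alpha> (\<lambda>j. E j \<omega> / D j \<omega>))) \<partial>M)
      = (\<integral>\<^sup>+\<omega>. F (?X \<omega>, Z \<omega>) \<partial>M)"
  proof (rule nn_integral_cong)
    fix \<omega> assume "\<omega> \<in> space M"
    then have sel: "ebh_sel n m \<alpha> (\<lambda>j. E j \<omega> / D j \<omega>) = ebh_sel n m \<alpha> (\<lambda>k. snd (?X \<omega> k) / B (Z \<omega>) k)"
      by (intro ebh_sel_cong) (simp add: D)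
    have rr: "risk_ratio n (\<lambda>j. L j \<omega>) R = risk_ratio n (\<lambda>k. fst (?X \<omega> k)) R" if "R \<subseteq> {1..m}" for R
      using that by (intro risk_ratio_cong) auto
    show "ennreal (risk_ratio n (\<lambda>j. L j \<omega>) (ebh_sel n m \<alpha> (\<lambda>j. E j \<omega> / D j \<omega>))) = F (?X \<omega>, Z \<omega>)"
      by (simp only: F_def sel rr[OF ebh_sel_subset] fst_conv snd_conv)
  qed
  also have "\<dots> = (\<integral>\<^sup>+x. \<integral>\<^sup>+z. F (x, z) \<partial>distr M Q Z \<partial>distr M ?S ?X)"
    using X Z indep F_measurable by (rule nn_integral_indep_set_iterated)
  also have "\<dots> \<le> (\<integral>\<^sup>+x. (\<Sum>j\<in>{1..m}. ennreal (\<alpha> * snd (x (n + j)) / real m * fst (x (n + j)))) \<partial>distr M ?S ?X)"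
    unfolding F_def fst_conv snd_conv by (intro nn_integral_mono inner)
  also have "\<dots> \<le> ennreal \<alpha>"
    using nn_integral_sum_scaled_products_le[OF assms(1) L E LE] by simp
  finally show ?thesis .
qed

lemma (in prob_space) nn_integral_risk_ratio_hete_boosted_le:
  fixes L E \<xi> :: "nat \<Rightarrow> 'a \<Rightarrow> real"
  assumes "0 < \<alpha>"
    and L: "\<And>j. j \<in> {n+1..n+m} \<Longrightarrow> L j \<in> borel_measurable M"
    and E: "\<And>j. j \<in> {n+1..n+m} \<Longrightarrow> E j \<in> borel_measurable M"
    and LE: "\<And>j. j \<in> {n+1..n+m} \<Longrightarrow> (\<integral>\<^sup>+\<omega>. ennreal (L j \<omega> * E j \<omega>) \<partial>M) \<le> 1"
    and uniform: "\<forall>j\<in>{n+1..n+m}. distr M borel (\<xi> j) = uniform_measure lborel {0..1}"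
    and indep_\<xi>: "indep_vars (\<lambda>_. borel) \<xi> {n+1..n+m}"
    and \<xi>: "\<forall>j\<in>{n+1..n+m}. \<xi> j \<in> borel_measurable M"
    and indep: "indep_set
      (sets (vimage_algebra (space M) (\<lambda>\<omega>. \<lambda>j\<in>{n+1..n+m}. (L j \<omega>, E j \<omega>)) (Pi\<^sub>M {n+1..n+m} (\<lambda>_. borel \<Otimes>\<^sub>M borel))))
      (sets (vimage_algebra (space M) (\<lambda>\<omega>. \<lambda>j\<in>{n+1..n+m}. \<xi> j \<omega>) (Pi\<^sub>M {n+1..n+m} (\<lambda>_. borel))))"
  shows "(\<integral>\<^sup>+\<omega>. ennreal (risk_ratio n (\<lambda>j. L j \<omega>) (ebh_sel n m \<alpha> (\<lambda>j. E j \<omega> / \<xi> j \<omega>))) \<partial>M) \<le> ennreal \<alpha>"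
proof (rule nn_integral_risk_ratio_boosted_le[OF less_imp_le[OF assms(1)] L E LE _ indep])
  let ?Z = "\<lambda>\<omega>. \<lambda>j\<in>{n+1..n+m}. \<xi> j \<omega>"
  show "random_variable (Pi\<^sub>M {n+1..n+m} (\<lambda>_. borel)) ?Z"
    using \<xi> by (intro measurable_restrict) auto
  show "(\<lambda>z. z (n + j)) \<in> borel_measurable (Pi\<^sub>M {n+1..n+m} (\<lambda>_. borel))" if "j \<in> {1..m}" for j
    using that by (intro measurable_component_singleton) auto
  show "\<xi> (n + j) \<omega> = ?Z \<omega> (n + j)" if "j \<in> {1..m}" for \<omega> j
    using that by simp
  show "(\<integral>\<^sup>+z. ennreal (risk_ratio n l (ebh_sel n m \<alpha> (\<lambda>k. e k / z k))) \<partial>distr M (Pi\<^sub>M {n+1..n+m} (\<lambda>_. borel)) ?Z)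
      \<le> (\<Sum>j\<in>{1..m}. ennreal (\<alpha> * e (n + j) / real m * l (n + j)))" for l e
  proof (cases "m = 0") \<comment> \<open>\<open>indep_vars_iff_distr_eq_PiM'\<close> needs a nonempty index set\<close>
    case True
    then have "ebh_sel n m \<alpha> T = {}" for T
      using ebh_sel_subset[of n m \<alpha> T] by auto
    then show ?thesis
      by (simp add: risk_ratio_def)
  next
    case False
    have "distr M (Pi\<^sub>M {n+1..n+m} (\<lambda>_. borel)) ?Z = Pi\<^sub>M {n+1..n+m} (\<lambda>j. distr M borel (\<xi> j))"
      using indep_vars_iff_distr_eq_PiM'[where I="{n+1..n+m}" and M'="\<lambda>_. borel" and X=\<xi>] indep_\<xi> \<xi> False by simp
    also have "\<dots> = Pi\<^sub>M {n+1..n+m} (\<lambda>_. uniform_measure lborel {0..1})"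
      using uniform by (intro PiM_cong) simp_all
    finally show ?thesis
      using nn_integral_risk_ratio_ebh_sel_hete_le[OF assms(1)] by simp
  qed
qed

lemma (in prob_space) nn_integral_risk_ratio_homo_boosted_le:
  fixes L E :: "nat \<Rightarrow> 'a \<Rightarrow> real" and \<xi> :: "'a \<Rightarrow> real"
  assumes "0 < \<alpha>"
    and L: "\<And>j. j \<in> {n+1..n+m} \<Longrightarrow> L j \<in> borel_measurable M"
    and E: "\<And>j. j \<in> {n+1..n+m} \<Longrightarrow> E j \<in> borel_measurable M"
    and LE: "\<And>j. j \<in> {n+1..n+m} \<Longrightarrow> (\<integral>\<^sup>+\<omega>. ennreal (L j \<omega> * E j \<omega>) \<partial>M) \<le> 1"
    and uniform: "distr M borel \<xi> = uniform_measure lborel {0..1}"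
    and \<xi>: "\<xi> \<in> borel_measurable M"
    and indep: "indep_set
      (sets (vimage_algebra (space M) (\<lambda>\<omega>. \<lambda>j\<in>{n+1..n+m}. (L j \<omega>, E j \<omega>)) (Pi\<^sub>M {n+1..n+m} (\<lambda>_. borel \<Otimes>\<^sub>M borel))))
      (sets (vimage_algebra (space M) \<xi> borel))"
  shows "(\<integral>\<^sup>+\<omega>. ennreal (risk_ratio n (\<lambda>j. L j \<omega>) (ebh_sel n m \<alpha> (\<lambda>j. E j \<omega> / \<xi> \<omega>))) \<partial>M) \<le> ennreal \<alpha>"
  using nn_integral_risk_ratio_ebh_sel_homo_le[OF assms(1)]
  by (intro nn_integral_risk_ratio_boosted_le[OF less_imp_le[OF assms(1)] L E LE \<xi> indep, where B="\<lambda>t k. t"])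
    (simp_all add: uniform)

theorem theorem5p2:
  fixes M :: "'a measure" and n m :: nat and \<alpha> :: real
    and L E :: "nat \<Rightarrow> 'a \<Rightarrow> real"
  assumes "prob_space M"
    and "0 < \<alpha>" and "\<alpha> < 1"
    and "\<And>j. j \<in> {n+1..n+m} \<Longrightarrow> L j \<in> borel_measurable M"
    and "\<And>j. j \<in> {n+1..n+m} \<Longrightarrow> E j \<in> borel_measurable M"
    and "\<And>j. j \<in> {n+1..n+m} \<Longrightarrow> AE \<omega> in M. L j \<omega> \<ge> 0"
    and "\<And>j. j \<in> {n+1..n+m} \<Longrightarrow> AE \<omega> in M. E j \<omega> \<ge> 0"
    and "\<And>j. j \<in> {n+1..n+m} \<Longrightarrow> (\<integral>\<^sup>+ \<omega>. ennreal (L j \<omega> * E j \<omega>) \<partial>M) \<le> 1"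
  shows
    "(\<forall>\<xi> :: nat \<Rightarrow> 'a \<Rightarrow> real.
        (\<forall>j \<in> {n+1..n+m}. distr M borel (\<xi> j) = uniform_measure lborel {0..1})
        \<and> prob_space.indep_vars M (\<lambda>_. borel) \<xi> {n+1..n+m}
        \<and> (\<forall>j \<in> {n+1..n+m}. \<xi> j \<in> borel_measurable M)
        \<and> prob_space.indep_set M
            (sets (vimage_algebra (space M) (\<lambda>\<omega>. \<lambda>j\<in>{n+1..n+m}. (L j \<omega>, E j \<omega>))
                   (PiM {n+1..n+m} (\<lambda>_. borel \<Otimes>\<^sub>M borel))))
            (sets (vimage_algebra (space M) (\<lambda>\<omega>. \<lambda>j\<in>{n+1..n+m}. \<xi> j \<omega>)
                   (PiM {n+1..n+m} (\<lambda>_. borel))))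
      \<longrightarrow> (\<integral>\<^sup>+ \<omega>. ennreal (risk_ratio n (\<lambda>j. L j \<omega>)
                 (ebh_sel n m \<alpha> (\<lambda>j. E j \<omega> / \<xi> j \<omega>))) \<partial>M) \<le> ennreal \<alpha>)
     \<and>
     (\<forall>\<xi> :: 'a \<Rightarrow> real.
        distr M borel \<xi> = uniform_measure lborel {0..1}
        \<and> \<xi> \<in> borel_measurable M
        \<and> prob_space.indep_set M
            (sets (vimage_algebra (space M) (\<lambda>\<omega>. \<lambda>j\<in>{n+1..n+m}. (L j \<omega>, E j \<omega>))
                   (PiM {n+1..n+m} (\<lambda>_. borel \<Otimes>\<^sub>M borel))))
            (sets (vimage_algebra (space M) \<xi> borel))
      \<longrightarrow> (\<integral>\<^sup>+ \<omega>. ennreal (risk_ratio n (\<lambda>j. L j \<omega>)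
                 (ebh_sel n m \<alpha> (\<lambda>j. E j \<omega> / \<xi> \<omega>))) \<partial>M) \<le> ennreal \<alpha>)"
proof -
  interpret prob_space M
    by (rule assms(1))
  show ?thesis
  proof (intro conjI allI impI, goal_cases)
    case (1 \<xi>)
    then show ?case
      by (intro nn_integral_risk_ratio_hete_boosted_le[OF assms(2,4,5,8)]) simp_all
  next
    case (2 \<xi>)
    then show ?case
      by (intro nn_integral_risk_ratio_homo_boosted_le[OF assms(2,4,5,8)]) simp_all
  qed
qed

end
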